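(* There exist universal constants $C,C'>0$ such that for every $m>0$, every $\lambda>0$, every $\beta\in(0,1/3)$, every $\epsilon\in(0,1)$, every odd $n\in\mathbb{N}$ with $n\epsilon\ge C\ln(1/\beta)$ and $n\ge\beta/\lambda$, and every $D\in\mathcal{SPM}_\lambda$, setting $\alpha^*=1/(n\epsilon)$, with probability at least $1-\beta$, $$\mathrm{FAIR}(D,\mathtt{DPExpMed}_{\alpha^*}(D))\le C'\left(\frac{m}{n\epsilon}\ln\frac{n\lambda}{\beta}+m\lambda\right).$$
   Context: $V=[-m/2,m/2]$. A dataset is $D=(x_1,\dots,x_n)\in V^n$, indexed so that $x_1\le\dots\le x_n$, with median (optimal location) $\mathcal{T}(D)=x_{\lceil n/2\rceil}$. $\mathrm{FAIR}(D,\ell)=\max_{1\le i\le n}\left(|x_i-\ell|-|x_i-\mathcal{T}(D)|\right)$. A distribution $P$ on $V$ with density $f_P$ and CDF $F_P$ is single-peaked at $\ell$ if $f_P(x)\le f_P(y)$ whenever $x\le y\le\ell$ or $x\ge y\ge\ell$; $\mathcal{P}$ is the class of absolutely continuous distributions on $V$ single-peaked at their median $F_P^{-1}(0.5)$. With empirical CDF $F_D(\ell)=\frac1n|\{i:x_i\le\ell\}|$ and $\mathrm{KS}(D,P)=\sup_x|F_D(x)-F_P(x)|$, $\mathcal{SPM}_\lambda$ is the set of $D\in V^n$ with $\mathrm{KS}(D,P)\le\lambda$ for some $P\in\mathcal{P}$. The percentile loss $q(D,a)$ for $a\in V$ is: $\min\{|\lceil n/2\rceil-i|: a\in[x_i,\mathcal{T}(D)]\}$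 if $a\in[x_1,\mathcal{T}(D)]$; $\min\{|\lceil n/2\rceil-i|: a\in[\mathcal{T}(D),x_i]\}$ if $a\in(\mathcal{T}(D),x_n]$; $\lceil n/2\rceil$ otherwise. The widened loss is $p_\alpha(D,\ell)=\min_{a\in V:|a-\ell|\le\alpha m}q(D,a)$. $\mathtt{DPExpMed}_\alpha(D)$ is the random point of $V$ with density proportional to $\exp(-\frac{\epsilon}{2}p_\alpha(D,\ell))$. *)

theory Defs
  imports "HOL-Analysis.Analysis"
begin

definition Vset :: "real \<Rightarrow> real set" where
  "Vset m = {-m/2..m/2}"

text \<open>A dataset is a list D of reals; x_i (1-based) is the i-th smallest entry.\<close>
definition xi :: "real list \<Rightarrow> nat \<Rightarrow> real" where
  "xi D i = sort D ! (i - 1)"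

definition medidx :: "nat \<Rightarrow> nat" where
  "medidx n = (n + 1) div 2"

definition med :: "real list \<Rightarrow> real" where
  "med D = xi D (medidx (length D))"

definition FAIR :: "real list \<Rightarrow> real \<Rightarrow> real" where
  "FAIR D l = Max ((\<lambda>i. \<bar>xi D i - l\<bar> - \<bar>xi D i - med D\<bar>) ` {1..length D})"

definition pctl_loss :: "real list \<Rightarrow> real \<Rightarrow> nat" where
  "pctl_loss D a =
    (let n = length D; c = medidx n; T = med D in
     if xi D 1 \<le> a \<and> a \<le> T then
       Min ((\<lambda>i. nat \<bar>int c - int i\<bar>) ` {i \<in> {1..n}. xi D i \<le> a \<and> a \<le> T})
     else if T < a \<and> a \<le> xi D n then
       Min ((\<lambda>i. nat \<bar>int c - int i\<bar>) ` {i \<in> {1..n}. T \<le> a \<and> a \<le> xi D i})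
     else c)"

definition widened_loss :: "real \<Rightarrow> real \<Rightarrow> real list \<Rightarrow> real \<Rightarrow> nat" where
  "widened_loss m \<alpha> D l = Min (pctl_loss D ` {a \<in> Vset m. \<bar>a - l\<bar> \<le> \<alpha> * m})"

text \<open>Unnormalised density of DPExpMed_alpha(D) on V.\<close>
definition expmed_weight :: "real \<Rightarrow> real \<Rightarrow> real \<Rightarrow> real list \<Rightarrow> real \<Rightarrow> real" where
  "expmed_weight \<epsilon> m \<alpha> D l = exp (- (\<epsilon> / 2) * real (widened_loss m \<alpha> D l))"

definition expmed_prob :: "real \<Rightarrow> real \<Rightarrow> real \<Rightarrow> real list \<Rightarrow> real set \<Rightarrow> real" where
  "expmed_prob \<epsilon> m \<alpha> D S =
     integral (Vset m) (\<lambda>l. if l \<in> S then expmed_weight \<epsilon> m \<alpha> D l else 0)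
     / integral (Vset m) (expmed_weight \<epsilon> m \<alpha> D)"

definition emp_cdf :: "real list \<Rightarrow> real \<Rightarrow> real" where
  "emp_cdf D l = real (length (filter (\<lambda>x. x \<le> l) D)) / real (length D)"

definition is_density :: "real \<Rightarrow> (real \<Rightarrow> real) \<Rightarrow> bool" where
  "is_density m f \<longleftrightarrow> (\<forall>x \<in> Vset m. 0 \<le> f x) \<and> f integrable_on Vset m
      \<and> integral (Vset m) f = 1"

definition cdf_of :: "real \<Rightarrow> (real \<Rightarrow> real) \<Rightarrow> real \<Rightarrow> real" where
  "cdf_of m f x = integral {-m/2..min x (m/2)} f"

definition median_of :: "real \<Rightarrow> (real \<Rightarrow> real) \<Rightarrow> real" where
  "median_of m f = Inf {x. cdf_of m f x \<ge> 1/2}"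

definition single_peaked_at :: "real \<Rightarrow> (real \<Rightarrow> real) \<Rightarrow> real \<Rightarrow> bool" where
  "single_peaked_at m f l \<longleftrightarrow>
     (\<forall>x \<in> Vset m. \<forall>y \<in> Vset m.
        ((x \<le> y \<and> y \<le> l) \<or> (x \<ge> y \<and> y \<ge> l)) \<longrightarrow> f x \<le> f y)"

text \<open>The class P, represented by densities.\<close>
definition in_classP :: "real \<Rightarrow> (real \<Rightarrow> real) \<Rightarrow> bool" where
  "in_classP m f \<longleftrightarrow> is_density m f \<and> single_peaked_at m f (median_of m f)"

definition SPM :: "real \<Rightarrow> real \<Rightarrow> real list \<Rightarrow> bool" where
  "SPM m lam D \<longleftrightarrow> set D \<subseteq> Vset m \<and>
     (\<exists>f. in_classP m f \<and> (\<forall>x. \<bar>emp_cdf D x - cdf_of m f x\<bar> \<le> lam))"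

end

theory Submission
  imports Defs
begin

(* Since FAIR D l = |l - T| for the median T, the claim is that DPExpMed puts mass at least
   1 - beta within distance B = 1600 (m / (n eps) ln (n lambda / beta) + m lambda) of T.
   KS-closeness to a single-peaked P makes the CDF of P grow at rate at least 1/(4m) between
   its quartiles, so the percentile loss grows linearly away from the median,
   q(D, a) >= n |a - T| / (8m) - 2 n lambda, and widening by alpha m shifts this by alpha m.
   Outside the band of radius B the weight therefore decays like exp (- n eps |l - T| / (64 m)),
   while it equals 1 on an interval of length alpha m = m / (n eps) next to T; comparing the
   tail with the total mass gives the claim.  Since lambda >= 1/(2n), the logarithm
   ln (n lambda / beta) is at least ln (1 / (2 beta)).  For lambda >= 1/1600 the band already
   covers V. *)

lemma xi_mono:
  assumes "1 \<le> i" "i \<le> j" "j \<le> length D"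
  shows "xi D i \<le> xi D j"
  unfolding xi_def using assms by (intro sorted_nth_mono) auto

lemma xi_in_set:
  assumes "1 \<le> i" "i \<le> length D"
  shows "xi D i \<in> set D"
  using assms nth_mem[of "i - 1" "sort D"] by (simp add: xi_def)

definition count_le :: "real list \<Rightarrow> real \<Rightarrow> nat" where
  "count_le D x = card {i \<in> {1..length D}. xi D i \<le> x}"

lemma length_filter_le_eq_count_le:
  "length (filter (\<lambda>y. y \<le> x) D) = count_le D x"
proof -
  have "length (filter (\<lambda>y. y \<le> x) D) = length (filter (\<lambda>y. y \<le> x) (sort D))"
    by (metis mset_filter mset_sort size_mset)
  also have "\<dots> = card {i. i < length D \<and> sort D ! i \<le> x}"
    by (simp add: length_filter_conv_card)
  also have "\<dots> = card (Suc ` {i. i < length D \<and> sort D ! i \<le> x})"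
    by (simp add: card_image)
  also have "Suc ` {i. i < length D \<and> sort D ! i \<le> x} = {i \<in> {1..length D}. xi D i \<le> x}"
  proof (intro set_eqI iffI)
    fix i assume "i \<in> {i \<in> {1..length D}. xi D i \<le> x}"
    then show "i \<in> Suc ` {i. i < length D \<and> sort D ! i \<le> x}"
      unfolding xi_def by (intro image_eqI[of _ _ "i - 1"]) auto
  qed (auto simp: xi_def)
  finally show ?thesis
    by (simp add: count_le_def)
qed

lemma emp_cdf_eq_count_le: "emp_cdf D x = real (count_le D x) / real (length D)"
  by (simp add: emp_cdf_def length_filter_le_eq_count_le)

lemma count_le_less:
  assumes "1 \<le> k" "k \<le> length D" "x < xi D k"
  shows "count_le D x < k"
proof -
  have "{i \<in> {1..length D}. xi D i \<le> x} \<subseteq> {1..<k}"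
  proof
    fix i assume i: "i \<in> {i \<in> {1..length D}. xi D i \<le> x}"
    then have "\<not> k \<le> i"
      using assms xi_mono[of k i D] by auto
    then show "i \<in> {1..<k}" using i by auto
  qed
  then have "count_le D x \<le> card {1..<k}"
    unfolding count_le_def by (intro card_mono) auto
  then show ?thesis
    using assms(1) by simp
qed

lemma count_le_ge:
  assumes "1 \<le> k" "k \<le> length D" "xi D k \<le> x"
  shows "k \<le> count_le D x"
proof -
  have "{1..k} \<subseteq> {i \<in> {1..length D}. xi D i \<le> x}"
    using assms by (auto intro: order_trans[OF xi_mono])
  then have "card {1..k} \<le> count_le D x"
    unfolding count_le_def by (intro card_mono) auto
  then show ?thesis
    by simp
qed

lemma medidx_bounds:
  assumes "D \<noteq> []"
  shows "1 \<le> medidx (length D)" "medidx (length D) \<le> length D"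
  using assms unfolding medidx_def by (auto simp: Suc_le_eq)

lemma real_medidx_odd: "odd n \<Longrightarrow> real (medidx n) = (real n + 1) / 2"
  unfolding medidx_def by (auto elim!: oddE)

lemma med_bounds:
  assumes "D \<noteq> []"
  shows "xi D 1 \<le> med D" "med D \<le> xi D (length D)"
  using assms medidx_bounds[OF assms] unfolding med_def by (auto intro: xi_mono)

lemma med_in_set: "D \<noteq> [] \<Longrightarrow> med D \<in> set D"
  unfolding med_def using medidx_bounds xi_in_set by blast

lemma pctl_loss_le_medidx:
  assumes "D \<noteq> []"
  shows "pctl_loss D a \<le> medidx (length D)"
proof -
  let ?n = "length D" and ?c = "medidx (length D)"
  let ?g = "\<lambda>i. nat \<bar>int ?c - int i\<bar>"
  have c: "1 \<le> ?c" "?c \<le> ?n" "?n \<le> 2 * ?c"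
    using medidx_bounds[OF assms] by (auto simp: medidx_def)
  have "Min (?g ` {i \<in> {1..?n}. P i}) \<le> ?c" if "P j" "j \<in> {1..?n}" for P j
  proof -
    have "Min (?g ` {i \<in> {1..?n}. P i}) \<le> ?g j"
      using that by (intro Min_le) auto
    also have "\<dots> \<le> ?c"
      using that c by auto
    finally show ?thesis .
  qed
  from this[of "\<lambda>i. xi D i \<le> a \<and> a \<le> med D" 1] this[of "\<lambda>i. med D \<le> a \<and> a \<le> xi D i" ?n]
  show ?thesis
    using c unfolding pctl_loss_def Let_def by auto
qed

lemma pctl_loss_med:
  assumes "D \<noteq> []"
  shows "pctl_loss D (med D) = 0"
proof -
  let ?n = "length D" and ?c = "medidx (length D)"
  have "?c \<in> {i \<in> {1..?n}. xi D i \<le> med D \<and> med D \<le> med D}"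
    using medidx_bounds[OF assms] unfolding med_def by auto
  then have "Min ((\<lambda>i. nat \<bar>int ?c - int i\<bar>) ` {i \<in> {1..?n}. xi D i \<le> med D \<and> med D \<le> med D}) = 0"
    by (intro Min_eqI) force+
  then show ?thesis
    using med_bounds[OF assms] unfolding pctl_loss_def Let_def by simp
qed

lemma pctl_loss_antimono_left:
  assumes "D \<noteq> []" "a \<le> b" "b \<le> med D"
  shows "pctl_loss D b \<le> pctl_loss D a"
proof (cases "xi D 1 \<le> a")
  case True
  let ?g = "\<lambda>i. nat \<bar>int (medidx (length D)) - int i\<bar>"
  have "1 \<in> {i \<in> {1..length D}. xi D i \<le> a \<and> a \<le> med D}"
    using True assms by (auto simp: Suc_le_eq)
  then have "Min (?g ` {i \<in> {1..length D}. xi D i \<le> b \<and> b \<le> med D})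
      \<le> Min (?g ` {i \<in> {1..length D}. xi D i \<le> a \<and> a \<le> med D})"
    using assms by (intro Min_antimono) auto
  then show ?thesis
    using True assms unfolding pctl_loss_def Let_def by simp
next
  case False
  then have "pctl_loss D a = medidx (length D)"
    using assms unfolding pctl_loss_def Let_def by auto
  then show ?thesis
    using pctl_loss_le_medidx[OF assms(1)] by simp
qed

lemma pctl_loss_mono_right:
  assumes "D \<noteq> []" "med D \<le> a" "a \<le> b"
  shows "pctl_loss D a \<le> pctl_loss D b"
proof -
  let ?g = "\<lambda>i. nat \<bar>int (medidx (length D)) - int i\<bar>"
  consider "a = med D" | "xi D (length D) < b" | "med D < a" "b \<le> xi D (length D)"
    using assms by fastforce
  then show ?thesis
  proof cases
    case 1
    then show ?thesis
      using pctl_loss_med[OF assms(1)] by simp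
  next
    case 2
    then have "pctl_loss D b = medidx (length D)"
      using assms med_bounds[OF assms(1)] unfolding pctl_loss_def Let_def by auto
    then show ?thesis
      using pctl_loss_le_medidx[OF assms(1)] by simp
  next
    case 3
    have "length D \<in> {i \<in> {1..length D}. med D \<le> b \<and> b \<le> xi D i}"
      using 3 assms by (auto simp: Suc_le_eq)
    then have "Min (?g ` {i \<in> {1..length D}. med D \<le> a \<and> a \<le> xi D i})
        \<le> Min (?g ` {i \<in> {1..length D}. med D \<le> b \<and> b \<le> xi D i})"
      using assms by (intro Min_antimono) auto
    then show ?thesis
      using 3 assms unfolding pctl_loss_def Let_def by simp
  qed
qed

lemma pctl_loss_ge_left:
  assumes "D \<noteq> []" "a < med D"
  shows "medidx (length D) \<le> pctl_loss D a + count_le D a"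
proof (cases "xi D 1 \<le> a")
  case True
  let ?c = "medidx (length D)"
  define A where "A = {i \<in> {1..length D}. xi D i \<le> a \<and> a \<le> med D}"
  have "1 \<in> A"
    using True assms unfolding A_def by (auto simp: Suc_le_eq)
  then obtain i where i: "i \<in> A" "pctl_loss D a = nat \<bar>int ?c - int i\<bar>"
    using True assms Min_in[of "(\<lambda>i. nat \<bar>int ?c - int i\<bar>) ` A"]
    unfolding pctl_loss_def Let_def A_def by fastforce
  have "i < ?c"
    using i assms xi_mono[of ?c i D] medidx_bounds[OF assms(1)]
    unfolding A_def med_def by (force simp: not_less[symmetric])
  moreover have "i \<le> count_le D a"
    using i unfolding A_def by (intro count_le_ge) auto
  ultimately show ?thesis
    using i by linarith
next
  case False
  then show ?thesis
    using assms unfolding pctl_loss_def Let_def by auto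
qed

lemma pctl_loss_ge_right:
  assumes "D \<noteq> []" "odd (length D)" "a' < a" "med D < a"
  shows "count_le D a' < pctl_loss D a + medidx (length D)"
proof (cases "a \<le> xi D (length D)")
  case True
  let ?c = "medidx (length D)"
  define A where "A = {i \<in> {1..length D}. med D \<le> a \<and> a \<le> xi D i}"
  have "length D \<in> A"
    using True assms unfolding A_def by (auto simp: Suc_le_eq)
  then obtain i where i: "i \<in> A" "pctl_loss D a = nat \<bar>int ?c - int i\<bar>"
    using True assms Min_in[of "(\<lambda>i. nat \<bar>int ?c - int i\<bar>) ` A"]
    unfolding pctl_loss_def Let_def A_def by fastforce
  have "?c < i"
    using i assms xi_mono[of i ?c D] medidx_bounds[OF assms(1)]
    unfolding A_def med_def by (force simp: not_less[symmetric])
  moreover have "count_le D a' < i"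
    using i assms(3) unfolding A_def by (intro count_le_less) auto
  ultimately show ?thesis
    using i by linarith
next
  case False
  then have "pctl_loss D a = medidx (length D)"
    using assms unfolding pctl_loss_def Let_def by auto
  moreover have "count_le D a' \<le> card {1..length D}"
    unfolding count_le_def by (intro card_mono) auto
  ultimately show ?thesis
    using assms(2) unfolding medidx_def by (auto elim!: oddE)
qed

definition window :: "real \<Rightarrow> real \<Rightarrow> real \<Rightarrow> real set" where
  "window m \<alpha> l = {a \<in> Vset m. \<bar>a - l\<bar> \<le> \<alpha> * m}"

lemma widened_loss_window: "widened_loss m \<alpha> D l = Min (pctl_loss D ` window m \<alpha> l)"
  unfolding widened_loss_def window_def ..

lemma finite_pctl_loss_image:
  assumes "D \<noteq> []"
  shows "finite (pctl_loss D ` S)"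
  by (rule finite_subset[of _ "{..medidx (length D)}"]) (use pctl_loss_le_medidx[OF assms] in auto)

lemma widened_loss_le:
  assumes "D \<noteq> []" "a \<in> window m \<alpha> l"
  shows "widened_loss m \<alpha> D l \<le> pctl_loss D a"
  unfolding widened_loss_window using assms by (intro Min_le finite_pctl_loss_image) auto

lemma widened_loss_attained:
  assumes "D \<noteq> []" "l \<in> Vset m" "0 \<le> \<alpha>"
  obtains a where "a \<in> window m \<alpha> l" "widened_loss m \<alpha> D l = pctl_loss D a"
proof -
  have "0 \<le> m"
    using assms(2) by (simp add: Vset_def)
  then have "l \<in> window m \<alpha> l"
    using assms unfolding window_def by auto
  then have "widened_loss m \<alpha> D l \<in> pctl_loss D ` window m \<alpha> l"
    unfolding widened_loss_window by (intro Min_in finite_pctl_loss_image assms(1)) auto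
  then show ?thesis
    using that by blast
qed

lemma widened_loss_eq_0:
  assumes "D \<noteq> []" "med D \<in> Vset m" "\<bar>l - med D\<bar> \<le> \<alpha> * m"
  shows "widened_loss m \<alpha> D l = 0"
  using widened_loss_le[OF assms(1), of "med D"] pctl_loss_med[OF assms(1)] assms
  unfolding window_def by (simp add: abs_minus_commute)

lemma widened_loss_antimono_left:
  assumes "D \<noteq> []" "0 \<le> \<alpha>" "l1 \<in> Vset m" "l2 \<in> Vset m" "l1 \<le> l2" "l2 \<le> med D"
  shows "widened_loss m \<alpha> D l2 \<le> widened_loss m \<alpha> D l1"
proof -
  obtain a where a: "a \<in> window m \<alpha> l1" "widened_loss m \<alpha> D l1 = pctl_loss D a"
    using widened_loss_attained[OF assms(1,3,2)] .
  show ?thesis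
  proof (cases "l2 - \<alpha> * m \<le> a")
    case True
    then have "a \<in> window m \<alpha> l2"
      using a assms unfolding window_def by auto
    from widened_loss_le[OF assms(1) this] show ?thesis
      using a by simp
  next
    case False
    have "0 \<le> \<alpha> * m"
      using assms(2,3) by (simp add: Vset_def)
    then have "l2 - \<alpha> * m \<in> window m \<alpha> l2"
      using a assms False unfolding window_def Vset_def by auto
    then have "widened_loss m \<alpha> D l2 \<le> pctl_loss D (l2 - \<alpha> * m)"
      by (rule widened_loss_le[OF assms(1)])
    also have "\<dots> \<le> pctl_loss D a"
      using False assms \<open>0 \<le> \<alpha> * m\<close> by (intro pctl_loss_antimono_left) auto
    finally show ?thesis
      using a by simp
  qed
qed

lemma widened_loss_mono_right:
  assumes "D \<noteq> []" "0 \<le> \<alpha>" "l1 \<in> Vset m" "l2 \<in> Vset m" "l1 \<le> l2" "med D \<le> l1"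
  shows "widened_loss m \<alpha> D l1 \<le> widened_loss m \<alpha> D l2"
proof -
  obtain a where a: "a \<in> window m \<alpha> l2" "widened_loss m \<alpha> D l2 = pctl_loss D a"
    using widened_loss_attained[OF assms(1,4,2)] .
  show ?thesis
  proof (cases "a \<le> l1 + \<alpha> * m")
    case True
    then have "a \<in> window m \<alpha> l1"
      using a assms unfolding window_def by auto
    from widened_loss_le[OF assms(1) this] show ?thesis
      using a by simp
  next
    case False
    have "0 \<le> \<alpha> * m"
      using assms(2,3) by (simp add: Vset_def)
    then have "l1 + \<alpha> * m \<in> window m \<alpha> l1"
      using a assms False unfolding window_def Vset_def by auto
    then have "widened_loss m \<alpha> D l1 \<le> pctl_loss D (l1 + \<alpha> * m)"
      by (rule widened_loss_le[OF assms(1)])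
    also have "\<dots> \<le> pctl_loss D a"
      using False assms \<open>0 \<le> \<alpha> * m\<close> by (intro pctl_loss_mono_right) auto
    finally show ?thesis
      using a by simp
  qed
qed

lemma widened_loss_ge:
  assumes "D \<noteq> []" "0 \<le> \<alpha>" "l \<in> Vset m" "0 \<le> K"
    and pctl_loss_ge: "\<And>a. a \<in> Vset m \<Longrightarrow> K * \<bar>a - t\<bar> - L \<le> real (pctl_loss D a)"
  shows "K * (\<bar>l - t\<bar> - \<alpha> * m) - L \<le> real (widened_loss m \<alpha> D l)"
proof -
  obtain a where a: "a \<in> window m \<alpha> l" "widened_loss m \<alpha> D l = pctl_loss D a"
    using widened_loss_attained[OF assms(1,3,2)] .
  have "\<bar>l - t\<bar> - \<alpha> * m \<le> \<bar>a - t\<bar>"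
    using a(1) unfolding window_def by auto
  then have "K * (\<bar>l - t\<bar> - \<alpha> * m) \<le> K * \<bar>a - t\<bar>"
    using assms(4) by (rule mult_left_mono)
  then show ?thesis
    using a pctl_loss_ge[of a] unfolding window_def by auto
qed

locale classP_density =
  fixes m :: real and f :: "real \<Rightarrow> real"
  assumes m_pos: "0 < m" and in_classP: "in_classP m f"
begin

abbreviation F :: "real \<Rightarrow> real" where "F \<equiv> cdf_of m f"
abbreviation \<mu> :: real where "\<mu> \<equiv> median_of m f"

lemma density_nonneg: "x \<in> Vset m \<Longrightarrow> 0 \<le> f x"
  using in_classP unfolding in_classP_def is_density_def by auto

lemma integrable_density: "-m/2 \<le> u \<Longrightarrow> v \<le> m/2 \<Longrightarrow> f integrable_on {u..v}"
  using in_classP unfolding in_classP_def is_density_def Vset_def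
  by (auto intro: integrable_on_subinterval)

lemma cdf_eq_integral: "x \<in> Vset m \<Longrightarrow> F x = integral {-m/2..x} f"
  unfolding cdf_of_def Vset_def by (simp add: min_def)

lemma cdf_top: "F (m/2) = 1"
  using in_classP m_pos cdf_eq_integral[of "m/2"]
  unfolding in_classP_def is_density_def Vset_def by simp

lemma cdf_diff:
  assumes "u \<in> Vset m" "v \<in> Vset m" "u \<le> v"
  shows "F v - F u = integral {u..v} f"
proof -
  have "integral {-m/2..u} f + integral {u..v} f = integral {-m/2..v} f"
    using assms by (intro Henstock_Kurzweil_Integration.integral_combine integrable_density)
      (auto simp: Vset_def)
  then show ?thesis
    using cdf_eq_integral assms by auto
qed

lemma cdf_compl: "v \<in> Vset m \<Longrightarrow> 1 - F v = integral {v..m/2} f"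
  using cdf_diff[of v "m/2"] cdf_top m_pos by (simp add: Vset_def)

lemma median_in_V: "\<mu> \<in> Vset m"
proof -
  let ?S = "{x. F x \<ge> 1/2}"
  have top: "m/2 \<in> ?S"
    using cdf_top by simp
  have lower: "-m/2 \<le> x" if "x \<in> ?S" for x
    using that by (rule contrapos_pp) (simp add: cdf_of_def)
  have "Inf ?S \<le> m/2"
    using top lower by (intro cInf_lower) (auto simp: bdd_below_def)
  moreover have "-m/2 \<le> Inf ?S"
    using top lower by (intro cInf_greatest) auto
  ultimately show ?thesis
    unfolding median_of_def Vset_def by auto
qed

lemma single_peaked:
  "x \<in> Vset m \<Longrightarrow> y \<in> Vset m \<Longrightarrow> (x \<le> y \<and> y \<le> \<mu>) \<or> (y \<le> x \<and> \<mu> \<le> y) \<Longrightarrow> f x \<le> f y"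
  using in_classP unfolding in_classP_def single_peaked_at_def by blast

lemma density_le_peak: "x \<in> Vset m \<Longrightarrow> f x \<le> f \<mu>"
  using single_peaked[of x \<mu>] median_in_V by force

lemma integral_ge_const:
  assumes "-m/2 \<le> u" "u \<le> v" "v \<le> m/2" "\<And>x. x \<in> {u..v} \<Longrightarrow> k \<le> f x"
  shows "(v - u) * k \<le> integral {u..v} f"
proof -
  have "integral {u..v} (\<lambda>_. k) \<le> integral {u..v} f"
    using assms by (intro integral_le integrable_density) auto
  then show ?thesis
    using assms by simp
qed

lemma integral_le_const:
  assumes "-m/2 \<le> u" "u \<le> v" "v \<le> m/2" "\<And>x. x \<in> {u..v} \<Longrightarrow> f x \<le> k"
  shows "integral {u..v} f \<le> (v - u) * k"
proof -
  have "integral {u..v} f \<le> integral {u..v} (\<lambda>_. k)"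
    using assms by (intro integral_le integrable_density) auto
  then show ?thesis
    using assms by simp
qed

lemma cdf_diff_le_peak:
  assumes "u \<in> Vset m" "v \<in> Vset m" "u \<le> v"
  shows "F v - F u \<le> (v - u) * f \<mu>"
  using cdf_diff[OF assms] integral_le_const[of u v "f \<mu>"] assms density_le_peak
  by (auto simp: Vset_def)

text \<open>Left of the peak f is nondecreasing, so f u both bounds the mass on [u, v] from below
  and, up to the factor m, the mass F u to the left of u from above.\<close>

lemma cdf_growth_left:
  assumes "u \<in> Vset m" "v \<in> Vset m" "u \<le> v" "v \<le> \<mu>"
  shows "(v - u) * F u / m \<le> F v - F u"
proof -
  have "(v - u) * f u \<le> F v - F u"
    using assms cdf_diff[OF assms(1-3)]
    by (auto simp: Vset_def intro!: integral_ge_const single_peaked)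
  moreover have "integral {-m/2..u} f \<le> (u - -m/2) * f u"
    using assms by (intro integral_le_const) (auto simp: Vset_def intro!: single_peaked)
  then have "F u \<le> (u - -m/2) * f u"
    using cdf_eq_integral[OF assms(1)] by simp
  then have "F u \<le> m * f u"
    using density_nonneg[OF assms(1)] assms(1) mult_right_mono[of "u - -m/2" m "f u"]
    unfolding Vset_def by auto
  then have "F u / m \<le> f u"
    using m_pos by (simp add: divide_le_eq mult.commute)
  then have "(v - u) * F u / m \<le> (v - u) * f u"
    using assms(3) mult_left_mono[of "F u / m" "f u" "v - u"] by simp
  ultimately show ?thesis
    by linarith
qed

lemma cdf_growth_right:
  assumes "u \<in> Vset m" "v \<in> Vset m" "u \<le> v" "\<mu> \<le> u"
  shows "(v - u) * (1 - F v) / m \<le> F v - F u"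
proof -
  have "(v - u) * f v \<le> F v - F u"
    using assms cdf_diff[OF assms(1-3)]
    by (auto simp: Vset_def intro!: integral_ge_const single_peaked)
  moreover have "1 - F v \<le> (m/2 - v) * f v"
    using assms cdf_compl[OF assms(2)]
    by (auto simp: Vset_def intro!: integral_le_const single_peaked)
  then have "1 - F v \<le> m * f v"
    using density_nonneg[OF assms(2)] assms(2) mult_right_mono[of "m/2 - v" m "f v"]
    unfolding Vset_def by auto
  then have "(1 - F v) / m \<le> f v"
    using m_pos by (simp add: divide_le_eq mult.commute)
  then have "(v - u) * (1 - F v) / m \<le> (v - u) * f v"
    using assms(3) mult_left_mono[of "(1 - F v) / m" "f v" "v - u"] by simp
  ultimately show ?thesis
    by linarith
qed

lemma cdf_growth:
  assumes "u \<in> Vset m" "v \<in> Vset m" "u \<le> v" "1/4 \<le> F u" "F v \<le> 3/4"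
  shows "(v - u) / (4 * m) \<le> F v - F u"
proof -
  have left: "(b - a) / (4 * m) \<le> F b - F a"
    if "a \<in> Vset m" "b \<in> Vset m" "a \<le> b" "b \<le> \<mu>" "1/4 \<le> F a" for a b
  proof -
    have "(b - a) * (1/4) / m \<le> (b - a) * F a / m"
      using that m_pos by (intro divide_right_mono mult_left_mono) auto
    then show ?thesis
      using cdf_growth_left[OF that(1-4)] by simp
  qed
  have right: "(b - a) / (4 * m) \<le> F b - F a"
    if "a \<in> Vset m" "b \<in> Vset m" "a \<le> b" "\<mu> \<le> a" "F b \<le> 3/4" for a b
  proof -
    have "(b - a) * (1/4) / m \<le> (b - a) * (1 - F b) / m"
      using that m_pos by (intro divide_right_mono mult_left_mono) auto
    then show ?thesis
      using cdf_growth_right[OF that(1-4)] by simp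
  qed
  consider "v \<le> \<mu>" | "\<mu> \<le> u" | "u < \<mu>" "\<mu> < v"
    by linarith
  then show ?thesis
  proof cases
    case 3
    have "(v - u) / (4 * m) = (\<mu> - u) / (4 * m) + (v - \<mu>) / (4 * m)"
      by (simp add: diff_divide_distrib)
    then show ?thesis
      using left[of u \<mu>] right[of \<mu> v] 3 assms median_in_V by force
  qed (use left right assms in auto)
qed

end

lemma exp_neg_le_two_div:
  fixes y :: real
  assumes "0 \<le> y"
  shows "exp (- y) \<le> 2 / (1 + y\<^sup>2)"
proof -
  have "1 + y\<^sup>2 \<le> 2 * exp y"
    using exp_lower_Taylor_quadratic[OF assms] assms by simp
  then show ?thesis
    by (simp add: exp_minus field_simps add_pos_nonneg)
qed

lemma has_integral_inverse_one_plus_sq: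
  fixes k t a b :: real
  assumes "a \<le> b" "0 < k"
  shows "((\<lambda>l. 1 / (1 + (k * (l - t))\<^sup>2)) has_integral
           (arctan (k * (b - t)) - arctan (k * (a - t))) / k) {a..b}"
proof -
  have "((\<lambda>l. arctan (k * (l - t)) / k) has_real_derivative 1 / (1 + (k * (x - t))\<^sup>2)) (at x)" for x
  proof -
    have "((\<lambda>l. arctan (k * (l - t))) has_real_derivative inverse (1 + (k * (x - t))\<^sup>2) * k) (at x)"
      by (rule DERIV_chain2[OF DERIV_arctan]) (auto intro!: derivative_eq_intros)
    from DERIV_cdivide[OF this, of k] show ?thesis
      using assms(2) by (simp add: divide_inverse mult.assoc)
  qed
  then have "((\<lambda>l. arctan (k * (l - t)) / k) has_vector_derivative 1 / (1 + (k * (x - t))\<^sup>2))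
      (at x within {a..b})" for x
    by (simp add: has_real_derivative_iff_has_vector_derivative has_vector_derivative_at_within)
  from fundamental_theorem_of_calculus[OF assms(1) this] show ?thesis
    by (simp add: diff_divide_distrib)
qed

text \<open>Comparing exp (-y) with 2 / (1 + y^2) lets a single arctan antiderivative handle both
  sides of t.\<close>

lemma integral_outside_band_le:
  fixes w :: "real \<Rightarrow> real"
  assumes "w integrable_on {a..b}" "a \<le> b" "0 < k" "0 \<le> A"
    and decay: "\<And>l. l \<in> {a..b} \<Longrightarrow> B < \<bar>l - t\<bar> \<Longrightarrow> w l \<le> A * exp (- (k * \<bar>l - t\<bar>))"
  shows "integral {a..b} w - integral {a..b} (\<lambda>l. if \<bar>l - t\<bar> \<le> B then w l else 0)
           \<le> 2 * pi * A / k"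
proof -
  let ?band = "\<lambda>l. if \<bar>l - t\<bar> \<le> B then w l else 0"
  let ?h = "\<lambda>l. 2 * A * (1 / (1 + (k * (l - t))\<^sup>2))"
  have "(\<lambda>l. if l \<in> {t - B..t + B} then w l else 0) integrable_on {a..b}"
    by (subst integrable_restrict_Int)
      (auto simp: Int_atLeastAtMost intro: integrable_on_subinterval[OF assms(1)])
  moreover have "?band = (\<lambda>l. if l \<in> {t - B..t + B} then w l else 0)"
    by (auto simp: abs_le_iff)
  ultimately have band: "?band integrable_on {a..b}"
    by simp
  have h: "(?h has_integral 2 * A * ((arctan (k * (b - t)) - arctan (k * (a - t))) / k)) {a..b}"
    using has_integral_inverse_one_plus_sq[OF assms(2,3)] by (rule has_integral_mult_right)
  have "w l - ?band l \<le> ?h l" if "l \<in> {a..b}" for l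
  proof (cases "\<bar>l - t\<bar> \<le> B")
    case False
    then have "w l \<le> A * exp (- (k * \<bar>l - t\<bar>))"
      using decay that by simp
    also have "\<dots> \<le> A * (2 / (1 + (k * \<bar>l - t\<bar>)\<^sup>2))"
      using assms(3,4) by (intro mult_left_mono exp_neg_le_two_div) auto
    finally show ?thesis
      using False by (simp add: power_mult_distrib ac_simps)
  qed (use assms(4) in \<open>simp add: add_pos_nonneg\<close>)
  then have "integral {a..b} (\<lambda>l. w l - ?band l) \<le> integral {a..b} ?h"
    using assms(1) band h by (intro integral_le integrable_diff) auto
  also have "\<dots> \<le> 2 * A * (pi / k)"
    unfolding integral_unique[OF h] using assms(3,4)
      arctan_ubound[of "k * (b - t)"] arctan_lbound[of "k * (a - t)"]
    by (intro mult_left_mono divide_right_mono) auto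
  also have "\<dots> = 2 * pi * A / k"
    by simp
  finally show ?thesis
    using integral_diff[OF assms(1) band] by simp
qed

lemma pi_exp_two_beta_pow_25_le:
  fixes \<beta> :: real
  assumes "0 < \<beta>" "\<beta> < 1/3"
  shows "128 * pi * exp (1/16) * (2 * \<beta>) ^ 25 \<le> \<beta>"
proof -
  have "exp (1/16 :: real) \<le> 3"
    using exp_le exp_le_cancel_iff[of "1/16 :: real" 1] by linarith
  moreover have "\<beta> ^ 24 \<le> (1/3) ^ 24"
    using assms by (intro power_mono) auto
  ultimately have "128 * pi * exp (1/16) * (2 ^ 25 * \<beta> ^ 24) \<le> 128 * 4 * 3 * (2 ^ 25 * (1/3) ^ 24)"
    using pi_less_4 by (intro mult_mono) auto
  also have "\<dots> \<le> 1"
    by (simp add: power_one_over)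
  finally have "128 * pi * exp (1/16) * (2 ^ 25 * \<beta> ^ 24) * \<beta> \<le> \<beta>"
    using assms(1) mult_right_mono[of _ 1 \<beta>] by simp
  moreover have "(2 * \<beta>) ^ 25 = 2 ^ 25 * \<beta> ^ 24 * \<beta>"
    by (simp add: power_mult_distrib flip: power_Suc2)
  ultimately show ?thesis
    by (simp add: mult.assoc)
qed

lemma pi_exp_tail_le:
  fixes \<beta> L :: real
  assumes "0 < \<beta>" "\<beta> < 1/3" "ln (1 / (2 * \<beta>)) \<le> L"
  shows "128 * pi * exp (1/16 - 25 * L) \<le> \<beta>"
proof -
  have "exp (- L) \<le> 2 * \<beta>"
    using assms(1,3) exp_le_cancel_iff[of "- L" "ln (2 * \<beta>)"] by (simp add: ln_div)
  have "exp (1/16 - 25 * L) = exp (1/16) * exp (- (25 * L))"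
    by (simp flip: exp_add)
  also have "exp (- (25 * L)) = exp (- L) ^ 25"
    using exp_of_nat_mult[of 25 "- L"] by simp
  finally have "128 * pi * exp (1/16 - 25 * L) = 128 * pi * exp (1/16) * exp (- L) ^ 25"
    by simp
  also have "\<dots> \<le> 128 * pi * exp (1/16) * (2 * \<beta>) ^ 25"
    using \<open>exp (- L) \<le> 2 * \<beta>\<close> by (intro mult_left_mono power_mono) auto
  also have "\<dots> \<le> \<beta>"
    by (rule pi_exp_two_beta_pow_25_le[OF assms(1,2)])
  finally show ?thesis .
qed

lemma one_le_ln_inverse:
  fixes \<beta> :: real
  assumes "0 < \<beta>" "\<beta> < 1/3"
  shows "1 \<le> ln (1 / \<beta>)"
proof -
  have "3 \<le> 1 / \<beta>"
    using assms by (simp add: field_simps)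
  then have "exp 1 \<le> 1 / \<beta>"
    using exp_le by linarith
  then show ?thesis
    using assms(1) by (subst ln_ge_iff) auto
qed

locale dataset =
  fixes m :: real and D :: "real list"
  assumes nonempty: "D \<noteq> []" and in_V: "set D \<subseteq> Vset m"
begin

abbreviation n :: nat where "n \<equiv> length D"
abbreviation c :: nat where "c \<equiv> medidx (length D)"
abbreviation T :: real where "T \<equiv> med D"

lemma n_pos: "0 < real n"
  using nonempty by simp

lemma med_in_V: "T \<in> Vset m"
  using med_in_set[OF nonempty] in_V by blast

lemma FAIR_eq: "FAIR D l = \<bar>l - T\<bar>"
proof -
  let ?h = "\<lambda>i. \<bar>xi D i - l\<bar> - \<bar>xi D i - T\<bar>"
  have "?h i \<le> \<bar>l - T\<bar>" for i
    by linarith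
  moreover have "\<bar>l - T\<bar> \<in> ?h ` {1..n}"
  proof (cases "T \<le> l")
    case True
    then have "\<bar>l - T\<bar> = ?h 1"
      using med_bounds[OF nonempty] by simp
    then show ?thesis
      using nonempty by (intro rev_image_eqI[of 1]) (auto simp: Suc_le_eq)
  next
    case False
    then have "\<bar>l - T\<bar> = ?h n"
      using med_bounds[OF nonempty] by simp
    then show ?thesis
      using nonempty by (intro rev_image_eqI[of n]) (auto simp: Suc_le_eq)
  qed
  ultimately show ?thesis
    unfolding FAIR_def by (intro Max_eqI) auto
qed

lemma expmed_weight_nonneg: "0 \<le> expmed_weight \<epsilon> m \<alpha> D l"
  unfolding expmed_weight_def by simp

lemma expmed_weight_integrable:
  assumes "0 \<le> \<alpha>" "0 \<le> \<epsilon>"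
  shows "expmed_weight \<epsilon> m \<alpha> D integrable_on {-m/2..m/2}"
proof -
  let ?w = "expmed_weight \<epsilon> m \<alpha> D"
  have T: "-m/2 \<le> T" "T \<le> m/2"
    using med_in_V by (auto simp: Vset_def)
  have "mono_on {-m/2..T} ?w"
  proof (rule mono_onI)
    fix x y assume "x \<in> {-m/2..T}" "y \<in> {-m/2..T}" "x \<le> y"
    then have "widened_loss m \<alpha> D y \<le> widened_loss m \<alpha> D x"
      using T by (intro widened_loss_antimono_left[OF nonempty assms(1)]) (auto simp: Vset_def)
    then show "?w x \<le> ?w y"
      unfolding expmed_weight_def using assms(2) by (simp add: mult_left_mono)
  qed
  moreover have "mono_on {T..m/2} (\<lambda>l. - ?w l)"
  proof (rule mono_onI)
    fix x y assume "x \<in> {T..m/2}" "y \<in> {T..m/2}" "x \<le> y"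
    then have "widened_loss m \<alpha> D x \<le> widened_loss m \<alpha> D y"
      using T by (intro widened_loss_mono_right[OF nonempty assms(1)]) (auto simp: Vset_def)
    then show "- ?w x \<le> - ?w y"
      unfolding expmed_weight_def using assms(2) by (simp add: mult_left_mono)
  qed
  ultimately have "?w integrable_on {-m/2..T}" "?w integrable_on {T..m/2}"
    using integrable_neg[OF integrable_on_mono_on, of T "m/2" "\<lambda>l. - ?w l"]
    by (auto intro: integrable_on_mono_on)
  then show ?thesis
    using T by (rule Henstock_Kurzweil_Integration.integrable_combine[rotated 2])
qed

lemma integral_expmed_weight_ge:
  assumes "0 \<le> \<alpha>" "\<alpha> \<le> 1/2" "0 \<le> \<epsilon>"
  shows "\<alpha> * m \<le> integral {-m/2..m/2} (expmed_weight \<epsilon> m \<alpha> D)"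
proof -
  let ?w = "expmed_weight \<epsilon> m \<alpha> D"
  have T: "-m/2 \<le> T" "T \<le> m/2"
    using med_in_V by (auto simp: Vset_def)
  have am: "0 \<le> \<alpha> * m" "\<alpha> * m \<le> m / 2"
    using assms T mult_right_mono[of \<alpha> "1/2" m] by auto
  obtain a where a: "-m/2 \<le> a" "a + \<alpha> * m \<le> m/2" "T - \<alpha> * m \<le> a" "a \<le> T"
  proof (cases "T + \<alpha> * m \<le> m/2")
    case True
    then show ?thesis
      using that[of T] T am by auto
  next
    case False
    then show ?thesis
      using that[of "T - \<alpha> * m"] T am by auto
  qed
  have "?w l = 1" if "l \<in> {a..a + \<alpha> * m}" for l
  proof -
    have "\<bar>l - T\<bar> \<le> \<alpha> * m"
      using that a by (auto simp: abs_le_iff)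
    then show ?thesis
      using widened_loss_eq_0[OF nonempty med_in_V] unfolding expmed_weight_def by simp
  qed
  then have "integral {a..a + \<alpha> * m} ?w = integral {a..a + \<alpha> * m} (\<lambda>_. 1)"
    by (intro integral_cong) auto
  then have "integral {a..a + \<alpha> * m} ?w = \<alpha> * m"
    using am by simp
  moreover have "integral {a..a + \<alpha> * m} ?w \<le> integral {-m/2..m/2} ?w"
  proof (rule integral_subset_le)
    show "?w integrable_on {-m/2..m/2}"
      using assms by (intro expmed_weight_integrable) auto
    then show "?w integrable_on {a..a + \<alpha> * m}"
      by (rule integrable_on_subinterval) (use a in auto)
  qed (use a expmed_weight_nonneg in auto)
  ultimately show ?thesis
    by simp
qed

lemma expmed_prob_FAIR_le:
  "expmed_prob \<epsilon> m \<alpha> D {l. FAIR D l \<le> B} =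
     integral {-m/2..m/2} (\<lambda>l. if \<bar>l - T\<bar> \<le> B then expmed_weight \<epsilon> m \<alpha> D l else 0)
     / integral {-m/2..m/2} (expmed_weight \<epsilon> m \<alpha> D)"
  unfolding expmed_prob_def Vset_def FAIR_eq by simp

lemma expmed_prob_FAIR_le_eq_1:
  assumes "0 < m" "0 < \<alpha>" "\<alpha> \<le> 1/2" "0 \<le> \<epsilon>" "m \<le> B"
  shows "expmed_prob \<epsilon> m \<alpha> D {l. FAIR D l \<le> B} = 1"
proof -
  let ?w = "expmed_weight \<epsilon> m \<alpha> D"
  have "0 < integral {-m/2..m/2} ?w"
    using integral_expmed_weight_ge[of \<alpha> \<epsilon>] assms mult_pos_pos[of \<alpha> m] by linarith
  moreover have "\<bar>l - T\<bar> \<le> B" if "l \<in> {-m/2..m/2}" for l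
    using that med_in_V assms(5) by (auto simp: Vset_def)
  then have "integral {-m/2..m/2} (\<lambda>l. if \<bar>l - T\<bar> \<le> B then ?w l else 0)
      = integral {-m/2..m/2} ?w"
    by (intro integral_cong) auto
  ultimately show ?thesis
    unfolding expmed_prob_FAIR_le by simp
qed

lemma expmed_prob_FAIR_le_ge_of_decay:
  assumes "0 < m" "0 < \<alpha>" "\<alpha> \<le> 1/2" "0 \<le> \<epsilon>" "0 < k" "0 \<le> A" "0 \<le> \<beta>"
    and decay: "\<And>l. l \<in> Vset m \<Longrightarrow> B < \<bar>l - T\<bar> \<Longrightarrow>
      expmed_weight \<epsilon> m \<alpha> D l \<le> A * exp (- (k * \<bar>l - T\<bar>))"
    and tail: "2 * pi * A / k \<le> \<beta> * (\<alpha> * m)"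
  shows "1 - \<beta> \<le> expmed_prob \<epsilon> m \<alpha> D {l. FAIR D l \<le> B}"
proof -
  let ?w = "expmed_weight \<epsilon> m \<alpha> D"
  define Z where "Z = integral {-m/2..m/2} ?w"
  define Z_band where "Z_band = integral {-m/2..m/2} (\<lambda>l. if \<bar>l - T\<bar> \<le> B then ?w l else 0)"
  have Z: "\<alpha> * m \<le> Z"
    using integral_expmed_weight_ge[of \<alpha> \<epsilon>] assms unfolding Z_def by auto
  moreover have "0 < \<alpha> * m"
    using assms(1,2) by simp
  ultimately have Z_pos: "0 < Z"
    by linarith
  have "Z - Z_band \<le> 2 * pi * A / k"
    unfolding Z_def Z_band_def using assms expmed_weight_integrable[of \<alpha> \<epsilon>]
    by (intro integral_outside_band_le decay) (auto simp: Vset_def)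
  also have "\<dots> \<le> \<beta> * Z"
    using tail Z assms(7) mult_left_mono[of "\<alpha> * m" Z \<beta>] by linarith
  finally have "(1 - \<beta>) * Z \<le> Z_band"
    by (simp add: algebra_simps)
  then show ?thesis
    using Z_pos unfolding expmed_prob_FAIR_le Z_def[symmetric] Z_band_def[symmetric]
    by (simp add: pos_le_divide_eq)
qed

lemma expmed_prob_accuracy_large_lam:
  assumes "0 < m" "1 \<le> 1600 * lam" "0 < \<epsilon>" "0 < \<beta>" "\<beta> < 1/3"
    and "2 * ln (1 / \<beta>) \<le> real n * \<epsilon>" "\<beta> / lam \<le> real n"
  shows "1 - \<beta> \<le> expmed_prob \<epsilon> m (1 / (real n * \<epsilon>)) D
           {l. FAIR D l \<le> 1600 * (m / (real n * \<epsilon>) * ln (real n * lam / \<beta>) + m * lam)}"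
proof -
  have n\<epsilon>: "2 \<le> real n * \<epsilon>"
    using one_le_ln_inverse[OF assms(4,5)] assms(6) by linarith
  have "0 < lam"
    using assms(2) by simp
  then have "1 \<le> real n * lam / \<beta>"
    using assms(4,7) by (simp add: field_simps)
  then have "0 \<le> m / (real n * \<epsilon>) * ln (real n * lam / \<beta>)"
    using assms(1) n\<epsilon> by simp
  moreover have "m \<le> 1600 * (m * lam)"
    using assms(1,2) by simp
  ultimately have "m \<le> 1600 * (m / (real n * \<epsilon>) * ln (real n * lam / \<beta>) + m * lam)"
    by argo
  then show ?thesis
    using n\<epsilon> assms(1,3,4) by (subst expmed_prob_FAIR_le_eq_1) (auto simp: field_simps)
qed

end

locale spm_dataset = dataset m D + classP_density m f for m D f +
  fixes lam :: real
  assumes odd_length: "odd (length D)"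
    and ks_dist: "\<And>x. \<bar>emp_cdf D x - F x\<bar> \<le> lam"
begin

lemma lam_nonneg: "0 \<le> lam"
  using ks_dist[of 0] by linarith

lemma real_c: "real c = (real n + 1) / 2"
  using real_medidx_odd[OF odd_length] .

lemma count_le_le_cdf: "real (count_le D x) \<le> real n * F x + real n * lam"
  using ks_dist[of x] n_pos
  by (simp add: emp_cdf_eq_count_le abs_le_iff divide_le_eq algebra_simps)

lemma count_le_ge_cdf: "real n * F x - real n * lam \<le> real (count_le D x)"
proof -
  have "F x - lam \<le> real (count_le D x) / real n"
    using ks_dist[of x] by (simp add: emp_cdf_eq_count_le abs_le_iff)
  then have "(F x - lam) * real n \<le> real (count_le D x)"
    using pos_le_divide_eq[OF n_pos] by blast
  then show ?thesis
    by (simp add: algebra_simps)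
qed

lemma cdf_med_ge: "real c - real n * lam \<le> real n * F T"
proof -
  have "c \<le> count_le D T"
    using medidx_bounds[OF nonempty] unfolding med_def by (intro count_le_ge) auto
  then show ?thesis
    using count_le_le_cdf[of T] by linarith
qed

lemma n_cdf_growth:
  assumes "u \<in> Vset m" "v \<in> Vset m" "u \<le> v" "real n / 4 \<le> real n * F u" "real n * F v \<le> 3 * real n / 4"
  shows "real n * (v - u) / (4 * m) \<le> real n * F v - real n * F u"
proof -
  have "1/4 \<le> F u" "F v \<le> 3/4"
    using assms(4,5) n_pos by auto
  then have "real n * ((v - u) / (4 * m)) \<le> real n * (F v - F u)"
    using cdf_growth[OF assms(1-3)] by (intro mult_left_mono) auto
  then show ?thesis
    by (simp add: algebra_simps)
qed

lemma n_dist_div_le: "a \<in> Vset m \<Longrightarrow> real n * \<bar>a - T\<bar> / (8 * m) \<le> real n / 8"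
  using med_in_V m_pos mult_left_mono[of "\<bar>a - T\<bar>" m "real n"]
  by (auto simp: Vset_def divide_le_eq abs_le_iff)

text \<open>Comparing at the midpoint a' = (a + T)/2 < T instead of at T gives count_le D a' < c,
  while F still has to grow by (T - a)/(8m) on [a, a'].\<close>

lemma pctl_loss_ge_dist_left:
  assumes "lam \<le> 1/4" "a \<in> Vset m" "a < T"
  shows "real n * (T - a) / (8 * m) - 2 * (real n * lam) \<le> real (pctl_loss D a)"
proof -
  have q: "real c \<le> real (pctl_loss D a) + real (count_le D a)"
    using pctl_loss_ge_left[OF nonempty assms(3)] by linarith
  have X: "real n * (T - a) / (8 * m) \<le> real n / 8"
    using n_dist_div_le[OF assms(2)] assms(3) by simp
  have nlam: "0 \<le> real n * lam" "real n * lam \<le> real n / 4"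
    using assms(1) lam_nonneg n_pos mult_left_mono[of lam "1/4" "real n"] by simp_all
  show ?thesis
  proof (cases "F a < 1/4")
    case True
    then have "real n * F a \<le> real n / 4"
      using n_pos mult_left_mono[of "F a" "1/4" "real n"] by simp
    then have "real n / 8 - 2 * (real n * lam) \<le> real (pctl_loss D a)"
      using q real_c count_le_le_cdf[of a] nlam n_pos by argo
    then show ?thesis
      using X by linarith
  next
    case False
    define a' where "a' = (a + T) / 2"
    have a': "a \<le> a'" "a' < T" "a' \<in> Vset m"
      using assms med_in_V unfolding a'_def Vset_def by auto
    have "count_le D a' < c"
      using a'(2) medidx_bounds[OF nonempty] unfolding med_def by (intro count_le_less) auto
    then have Fa': "real n * F a' \<le> real c - 1 + real n * lam"
      using count_le_ge_cdf[of a'] by linarith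
    have "real n / 4 \<le> real n * F a"
      using False n_pos mult_left_mono[of "1/4" "F a" "real n"] by simp
    moreover have "real n * F a' \<le> 3 * real n / 4"
      using Fa' real_c nlam by argo
    ultimately have "real n * (a' - a) / (4 * m) \<le> real n * F a' - real n * F a"
      using a' assms(2) by (intro n_cdf_growth)
    moreover have "real n * (a' - a) / (4 * m) = real n * (T - a) / (8 * m)"
      unfolding a'_def by (simp add: field_simps)
    ultimately show ?thesis
      using q Fa' count_le_le_cdf[of a] by argo
  qed
qed

lemma pctl_loss_ge_dist_right:
  assumes "lam \<le> 1/4" "a \<in> Vset m" "T < a"
  shows "real n * (a - T) / (8 * m) - 2 * (real n * lam) \<le> real (pctl_loss D a)"
proof -
  define a' where "a' = (a + T) / 2"
  have a': "T \<le> a'" "a' < a" "a' \<in> Vset m"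
    using assms med_in_V unfolding a'_def Vset_def by auto
  have q: "real (count_le D a') + 1 \<le> real (pctl_loss D a) + real c"
    using pctl_loss_ge_right[OF nonempty odd_length a'(2) assms(3)] by linarith
  have X: "real n * (a - T) / (8 * m) \<le> real n / 8"
    using n_dist_div_le[OF assms(2)] assms(3) by simp
  have nlam: "0 \<le> real n * lam" "real n * lam \<le> real n / 4"
    using assms(1) lam_nonneg n_pos mult_left_mono[of lam "1/4" "real n"] by simp_all
  show ?thesis
  proof (cases "3/4 \<le> F a'")
    case True
    then have "3 * real n / 4 \<le> real n * F a'"
      using n_pos mult_left_mono[of "3/4" "F a'" "real n"] by simp
    then have "real n / 8 - 2 * (real n * lam) \<le> real (pctl_loss D a)"
      using q real_c count_le_ge_cdf[of a'] nlam n_pos by argo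
    then show ?thesis
      using X by linarith
  next
    case False
    have "real n * F a' \<le> 3 * real n / 4"
      using False n_pos mult_left_mono[of "F a'" "3/4" "real n"] by simp
    moreover have "real n / 4 \<le> real n * F T"
      using cdf_med_ge real_c nlam by argo
    ultimately have "real n * (a' - T) / (4 * m) \<le> real n * F a' - real n * F T"
      using a' med_in_V by (intro n_cdf_growth)
    moreover have "real n * (a' - T) / (4 * m) = real n * (a - T) / (8 * m)"
      unfolding a'_def by (simp add: field_simps)
    ultimately show ?thesis
      using q cdf_med_ge count_le_ge_cdf[of a'] by argo
  qed
qed

lemma pctl_loss_ge_dist:
  assumes "lam \<le> 1/4" "a \<in> Vset m"
  shows "real n / (8 * m) * \<bar>a - T\<bar> - 2 * (real n * lam) \<le> real (pctl_loss D a)"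
  using pctl_loss_ge_dist_left[OF assms] pctl_loss_ge_dist_right[OF assms]
    pctl_loss_med[OF nonempty] lam_nonneg n_pos
  by (cases a T rule: linorder_cases) (auto simp: abs_if)

text \<open>The empirical CDF jumps by at least 1/n at the median while F is continuous, so no
  sample is closer than 1/(2n) to a continuous distribution in KS distance.\<close>

lemma ks_dist_ge: "1 \<le> 2 * (real n * lam)"
proof (cases "T = -m/2")
  case True
  then have "F T = 0"
    using cdf_eq_integral[OF med_in_V] by simp
  then show ?thesis
    using cdf_med_ge medidx_bounds[OF nonempty] lam_nonneg n_pos by simp
next
  case False
  then have T: "-m/2 < T"
    using med_in_V by (auto simp: Vset_def)
  have peak: "0 \<le> f \<mu>"
    using density_nonneg[OF median_in_V] .
  have "1 - 2 * (real n * lam) \<le> 0 + e" if e: "0 < e" for e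
  proof -
    define \<delta> where "\<delta> = min (T + m/2) (e / (real n * (f \<mu> + 1)))"
    have \<delta>: "0 < \<delta>" "\<delta> * (real n * (f \<mu> + 1)) \<le> e"
      using T e n_pos peak by (auto simp: \<delta>_def min_le_iff_disj pos_le_divide_eq[symmetric])
    have "\<delta> \<le> T + m/2"
      by (simp add: \<delta>_def)
    then have "T - \<delta> \<in> Vset m"
      using med_in_V \<delta>(1) unfolding Vset_def by auto
    then have "F T - F (T - \<delta>) \<le> \<delta> * f \<mu>"
      using cdf_diff_le_peak[of "T - \<delta>" T] med_in_V \<delta>(1) by simp
    then have "real n * (F T - F (T - \<delta>)) \<le> real n * (\<delta> * f \<mu>)"
      using n_pos by (intro mult_left_mono) auto
    also have "\<dots> \<le> \<delta> * (real n * (f \<mu> + 1))"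
      using \<delta>(1) n_pos by (simp add: algebra_simps)
    finally have "real n * F T - real n * F (T - \<delta>) \<le> e"
      using \<delta>(2) by (simp add: algebra_simps)
    moreover have "count_le D (T - \<delta>) < c"
      using \<delta>(1) medidx_bounds[OF nonempty] unfolding med_def by (intro count_le_less) auto
    then have "real (count_le D (T - \<delta>)) + 1 \<le> real c"
      by linarith
    ultimately show ?thesis
      using cdf_med_ge count_le_ge_cdf[of "T - \<delta>"] by argo
  qed
  then show ?thesis
    using field_le_epsilon[of "1 - 2 * (real n * lam)" 0] by simp
qed

lemma expmed_weight_le_exp:
  assumes "lam \<le> 1/4" "0 \<le> \<alpha>" "0 \<le> \<epsilon>" "l \<in> Vset m"
  shows "expmed_weight \<epsilon> m \<alpha> D l
           \<le> exp (\<epsilon> * real n * (\<alpha> / 16 + lam) - \<epsilon> * real n * \<bar>l - T\<bar> / (16 * m))"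
proof -
  have "real n / (8 * m) * (\<bar>l - T\<bar> - \<alpha> * m) - 2 * (real n * lam) \<le> real (widened_loss m \<alpha> D l)"
    using m_pos by (intro widened_loss_ge[OF nonempty assms(2,4)] pctl_loss_ge_dist[OF assms(1)]) auto
  then have "\<epsilon> / 2 * (real n / (8 * m) * (\<bar>l - T\<bar> - \<alpha> * m) - 2 * (real n * lam))
      \<le> \<epsilon> / 2 * real (widened_loss m \<alpha> D l)"
    using assms(3) by (intro mult_left_mono) auto
  moreover have "\<epsilon> / 2 * (real n / (8 * m) * (\<bar>l - T\<bar> - \<alpha> * m) - 2 * (real n * lam))
      = \<epsilon> * real n * \<bar>l - T\<bar> / (16 * m) - \<epsilon> * real n * (\<alpha> / 16 + lam)"
    using m_pos by (simp add: field_simps)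
  ultimately show ?thesis
    unfolding expmed_weight_def by simp
qed

lemma expmed_weight_le_tail:
  assumes "lam \<le> 1/4" "0 < \<epsilon>" "0 \<le> L" "l \<in> Vset m"
    and far: "1600 * (m / (real n * \<epsilon>) * L + m * lam) < \<bar>l - T\<bar>"
  shows "expmed_weight \<epsilon> m (1 / (real n * \<epsilon>)) D l
           \<le> exp (1/16 - 25 * L) * exp (- (real n * \<epsilon> / (64 * m) * \<bar>l - T\<bar>))"
proof -
  define s where "s = real n * \<epsilon> / m"
  have "0 < s"
    unfolding s_def using n_pos m_pos assms(2) by simp
  then have "s * (1600 * (m / (real n * \<epsilon>) * L + m * lam)) \<le> s * \<bar>l - T\<bar>"
    using far by simp
  moreover have "s * (1600 * (m / (real n * \<epsilon>) * L + m * lam)) = 1600 * L + 1600 * (\<epsilon> * real n * lam)"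
    unfolding s_def using m_pos n_pos assms(2) by (simp add: field_simps)
  moreover have "\<epsilon> * real n * (1 / (real n * \<epsilon>) / 16 + lam) - \<epsilon> * real n * \<bar>l - T\<bar> / (16 * m)
      = 1/16 + \<epsilon> * real n * lam - s * \<bar>l - T\<bar> / 16"
    unfolding s_def using n_pos assms(2) by (simp add: field_simps)
  moreover have "0 \<le> \<epsilon> * real n * lam"
    using assms(2) lam_nonneg by simp
  \<comment> \<open>three quarters of the decay rate pay for 25 L + \<epsilon> n lam, as 1600 = 64 * 25\<close>
  ultimately have "\<epsilon> * real n * (1 / (real n * \<epsilon>) / 16 + lam) - \<epsilon> * real n * \<bar>l - T\<bar> / (16 * m)
      \<le> 1/16 - 25 * L - s * \<bar>l - T\<bar> / 64"
    using assms(3) by argo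
  moreover have "expmed_weight \<epsilon> m (1 / (real n * \<epsilon>)) D l
      \<le> exp (\<epsilon> * real n * (1 / (real n * \<epsilon>) / 16 + lam) - \<epsilon> * real n * \<bar>l - T\<bar> / (16 * m))"
    using assms(2) by (intro expmed_weight_le_exp[OF assms(1) _ _ assms(4)]) auto
  ultimately have "expmed_weight \<epsilon> m (1 / (real n * \<epsilon>)) D l \<le> exp (1/16 - 25 * L - s * \<bar>l - T\<bar> / 64)"
    by (meson exp_le_cancel_iff order_trans)
  moreover have "s * \<bar>l - T\<bar> / 64 = real n * \<epsilon> / (64 * m) * \<bar>l - T\<bar>"
    unfolding s_def by simp
  ultimately show ?thesis
    by (simp add: mult_exp_exp)
qed

lemma expmed_prob_accuracy_small_lam:
  assumes "lam \<le> 1/4" "0 < \<epsilon>" "0 < \<beta>" "\<beta> < 1/3" "2 * ln (1 / \<beta>) \<le> real n * \<epsilon>"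
  shows "1 - \<beta> \<le> expmed_prob \<epsilon> m (1 / (real n * \<epsilon>)) D
           {l. FAIR D l \<le> 1600 * (m / (real n * \<epsilon>) * ln (real n * lam / \<beta>) + m * lam)}"
proof -
  define L where "L = ln (real n * lam / \<beta>)"
  define k where "k = real n * \<epsilon> / (64 * m)"
  have n\<epsilon>: "2 \<le> real n * \<epsilon>"
    using one_le_ln_inverse[OF assms(3,4)] assms(5) by linarith
  have "1 / (2 * \<beta>) \<le> real n * lam / \<beta>"
    using ks_dist_ge assms(3) by (simp add: field_simps)
  moreover have "0 < real n * lam"
    using ks_dist_ge by linarith
  ultimately have L: "ln (1 / (2 * \<beta>)) \<le> L"
    unfolding L_def using assms(3) by (subst ln_le_cancel_iff) auto
  moreover have "0 \<le> ln (1 / (2 * \<beta>))"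
    using assms(3,4) by (simp add: field_simps)
  ultimately have L0: "0 \<le> L"
    by linarith
  have "2 * pi * exp (1/16 - 25 * L) / k = 128 * pi * exp (1/16 - 25 * L) * (m / (real n * \<epsilon>))"
    unfolding k_def by simp
  also have "\<dots> \<le> \<beta> * (m / (real n * \<epsilon>))"
    using pi_exp_tail_le[OF assms(3,4) L] m_pos n\<epsilon> by (intro mult_right_mono) auto
  also have "\<dots> = \<beta> * (1 / (real n * \<epsilon>) * m)"
    by simp
  finally have tail: "2 * pi * exp (1/16 - 25 * L) / k \<le> \<beta> * (1 / (real n * \<epsilon>) * m)" .
  have k: "0 < k" and \<alpha>: "0 < 1 / (real n * \<epsilon>)" "1 / (real n * \<epsilon>) \<le> 1/2"
    unfolding k_def using m_pos n\<epsilon> by auto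
  show ?thesis
    unfolding L_def[symmetric]
  proof (rule expmed_prob_FAIR_le_ge_of_decay[where k = k and A = "exp (1/16 - 25 * L)"])
    fix l assume "l \<in> Vset m" "1600 * (m / (real n * \<epsilon>) * L + m * lam) < \<bar>l - T\<bar>"
    then show "expmed_weight \<epsilon> m (1 / (real n * \<epsilon>)) D l \<le> exp (1/16 - 25 * L) * exp (- (k * \<bar>l - T\<bar>))"
      unfolding k_def by (rule expmed_weight_le_tail[OF assms(1,2) L0])
  qed (use m_pos assms(2,3) tail k \<alpha> in auto)
qed


lemma expmed_prob_accuracy:
  assumes "0 < \<epsilon>" "0 < \<beta>" "\<beta> < 1/3" "2 * ln (1 / \<beta>) \<le> real n * \<epsilon>" "\<beta> / lam \<le> real n"
  shows "1 - \<beta> \<le> expmed_prob \<epsilon> m (1 / (real n * \<epsilon>)) D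
           {l. FAIR D l \<le> 1600 * (m / (real n * \<epsilon>) * ln (real n * lam / \<beta>) + m * lam)}"
proof (cases "1600 * lam \<le> 1")
  case True
  then show ?thesis
    using expmed_prob_accuracy_small_lam assms(1-4) by simp
next
  case False
  then show ?thesis
    using expmed_prob_accuracy_large_lam m_pos assms by simp
qed

end

theorem theorem7p18:
  shows "\<exists>C C'. C > 0 \<and> C' > 0 \<and>
    (\<forall>(m::real) (lam::real) (\<beta>::real) (\<epsilon>::real) (n::nat) (D::real list).
       m > 0 \<longrightarrow> lam > 0 \<longrightarrow> 0 < \<beta> \<longrightarrow> \<beta> < 1/3 \<longrightarrow> 0 < \<epsilon> \<longrightarrow> \<epsilon> < 1 \<longrightarrow>
       odd n \<longrightarrow> real n * \<epsilon> \<ge> C * ln (1 / \<beta>) \<longrightarrow> real n \<ge> \<beta> / lam \<longrightarrow>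
       length D = n \<longrightarrow> SPM m lam D \<longrightarrow>
       expmed_prob \<epsilon> m (1 / (real n * \<epsilon>)) D
         {l. FAIR D l \<le> C' * (m / (real n * \<epsilon>) * ln (real n * lam / \<beta>) + m * lam)}
       \<ge> 1 - \<beta>)"
proof (rule exI[of _ 2], rule exI[of _ 1600], intro conjI allI impI)
  fix m lam \<beta> \<epsilon> :: real and n :: nat and D :: "real list"
  assume m: "m > 0" and "lam > 0" and \<beta>: "0 < \<beta>" "\<beta> < 1/3" and \<epsilon>: "0 < \<epsilon>" "\<epsilon> < 1"
    and odd: "odd n" and n\<epsilon>: "real n * \<epsilon> \<ge> 2 * ln (1 / \<beta>)" and n\<beta>: "real n \<ge> \<beta> / lam"
    and len: "length D = n" and "SPM m lam D"
  then obtain f where "set D \<subseteq> Vset m" "in_classP m f" "\<And>x. \<bar>emp_cdf D x - cdf_of m f x\<bar> \<le> lam"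
    unfolding SPM_def by blast
  moreover have "D \<noteq> []"
    using odd len by auto
  ultimately interpret S: spm_dataset m D f lam
    using m odd len by unfold_locales auto
  show "1 - \<beta> \<le> expmed_prob \<epsilon> m (1 / (real n * \<epsilon>)) D
          {l. FAIR D l \<le> 1600 * (m / (real n * \<epsilon>) * ln (real n * lam / \<beta>) + m * lam)}"
    using S.expmed_prob_accuracy[of \<epsilon> \<beta>] \<epsilon>(1) \<beta> n\<epsilon> n\<beta> unfolding len by simp
qed simp_all

end
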